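(* Let $d\geq2$, $R>0$, $\delta>0$. There exists a constant $C>0$ depending only on $\delta$ and $R$ such that the following holds. Let $X^+,X^-\subset R\mathbb{B}_2^d$ be two $\delta$-separated finite sets, $N:=|X^+|+|X^-|$, let $x_1,\dots,x_N$ enumerate $X^+\cup X^-$ in nonincreasing order of norm, and let $\sigma(x)=\pm1$ according as $x\in X^\pm$. Let \[ k:=C\left(\frac{32R}{\delta^2}\right)^2\left(w^2\big((X^+-X^-)\cup X^+\cup X^-\big)+R^2\right), \] and let $\gamma\in(0,\max(\delta^2/(8Rd),\delta^2/(18R\sqrt k))]$. Suppose $w_1,\dots,w_N\in\mathbb{S}^{d-1}$ and $b_1,\dots,b_N\in\mathbb{R}$ are such that, for each $i$: if there is some $j>i$ with $\sigma(x_j)\neq\sigma(x_i)$, then $w_i^Tx_i+b_i\geq\gamma$ and $w_i^Tx_j+b_i\leq-\gamma$ for all $j>i$ with $\sigma(x_j)\neq\sigma(x_i)$; otherwise $w_i^Tx_i+b_i\geq\gamma$ and $w_i^Tx+b_i\leq0$ for some $x\in R\mathbb{B}_2^d$. Let $W$ be the $N\times d$ matrix with rows $w_i^T$, $b=(b_i)_i$, and $\Phi(x)=\mathrm{ReLU}(Wx+b)$. Then $\Phi(X^+)$ and $\Phi(X^-)$ are linearly separable with margin at least $\sqrt N\,\mathcal{M}(\gamma,N)$, where \[ \mathcal{M}(\gamma,N):=\sqrt{\frac{4R(R+\gamma)}{N(1+2R/\gamma)^{2N}-N}}. \]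
   Context: $\|\cdot\|$ Euclidean norm, $R\mathbb{B}_2^d$ closed ball of radius $R$ at $0$, $\mathbb{S}^{d-1}$ unit sphere, $\mathrm{ReLU}(x)=\max(x,0)$ coordinatewise. $\delta$-separated: $\|x^+-x^-\|\geq\delta$ for all $x^\pm\in X^\pm$. $X^+-X^-:=\{x^+-x^-\}$. Gaussian width $w(T):=\mathbb{E}\sup_{x\in T}g^Tx$, $g\sim\mathcal N(0,I_d)$. $S^+,S^-\subset\mathbb{R}^N$ are linearly separable with margin at least $m$ if there exist nonzero $a\in\mathbb{R}^N$, $c\in\mathbb{R}$ with $a^Ts+c>0$ on $S^+$, $<0$ on $S^-$, and $\inf\{|a^Ts+c|/\|a\|:s\in S^+\cup S^-\}\geq m$. (The network described is any output of the paper's Algorithm 1.) *)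

theory Defs
  imports "HOL-Probability.Probability"
begin

text \<open>Euclidean space R^d is represented explicitly (so that the dimension d can be
quantified inside the statement, after the constant C): a point of R^d is a function
nat => real vanishing at all indices i >= d.\<close>

definition rvecs :: "nat \<Rightarrow> (nat \<Rightarrow> real) set" where
  "rvecs d = {x. \<forall>i\<ge>d. x i = 0}"

definition dinner :: "nat \<Rightarrow> (nat \<Rightarrow> real) \<Rightarrow> (nat \<Rightarrow> real) \<Rightarrow> real" where
  "dinner d x y = (\<Sum>i<d. x i * y i)"

definition dnorm :: "nat \<Rightarrow> (nat \<Rightarrow> real) \<Rightarrow> real" where
  "dnorm d x = sqrt (dinner d x x)"

definition std_gauss :: "nat \<Rightarrow> (nat \<Rightarrow> real) measure" where
  "std_gauss d = PiM {..<d} (\<lambda>_. density lborel (\<lambda>t. ennreal (std_normal_density t)))"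

definition gaussian_width :: "nat \<Rightarrow> (nat \<Rightarrow> real) set \<Rightarrow> real" where
  "gaussian_width d T = (\<integral>g. (SUP x\<in>T. dinner d g x) \<partial>std_gauss d)"

definition delta_separated :: "nat \<Rightarrow> real \<Rightarrow> (nat \<Rightarrow> real) set \<Rightarrow> (nat \<Rightarrow> real) set \<Rightarrow> bool" where
  "delta_separated d \<delta> Xp Xm = (\<forall>p\<in>Xp. \<forall>q\<in>Xm. dnorm d (\<lambda>i. p i - q i) \<ge> \<delta>)"

definition set_diff_vec :: "(nat \<Rightarrow> real) set \<Rightarrow> (nat \<Rightarrow> real) set \<Rightarrow> (nat \<Rightarrow> real) set" where
  "set_diff_vec A B = {(\<lambda>i. p i - q i) | p q. p \<in> A \<and> q \<in> B}"

definition lin_sep_margin :: "nat \<Rightarrow> (nat \<Rightarrow> real) set \<Rightarrow> (nat \<Rightarrow> real) set \<Rightarrow> real \<Rightarrow> bool" where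
  "lin_sep_margin N Sp Sm m =
    (\<exists>a c. a \<in> rvecs N \<and> (\<exists>i<N. a i \<noteq> 0) \<and>
       (\<forall>s\<in>Sp. dinner N a s + c > 0) \<and>
       (\<forall>s\<in>Sm. dinner N a s + c < 0) \<and>
       (\<forall>s\<in>Sp \<union> Sm. \<bar>dinner N a s + c\<bar> / dnorm N a \<ge> m))"

definition relu_map :: "nat \<Rightarrow> nat \<Rightarrow> (nat \<Rightarrow> nat \<Rightarrow> real) \<Rightarrow> (nat \<Rightarrow> real) \<Rightarrow> (nat \<Rightarrow> real) \<Rightarrow> (nat \<Rightarrow> real)" where
  "relu_map d N w b x = (\<lambda>i. if i < N then max (dinner d (w i) x + b i) 0 else 0)"

definition margin_M :: "real \<Rightarrow> real \<Rightarrow> nat \<Rightarrow> real" where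
  "margin_M R \<gamma> N = sqrt (4 * R * (R + \<gamma>) / (real N * (1 + 2 * R / \<gamma>) ^ (2 * N) - real N))"

end

theory Submission
  imports Defs
begin

text \<open>Neuron \<open>i\<close> fires on \<open>x\<^sub>i\<close> with activation at least \<open>\<gamma>\<close> and, thanks to the ReLU,
is silent on every later point of the opposite class; since its bias is at most \<open>R\<close>, all its
activations lie in \<open>[0, 2R]\<close>. Give neuron \<open>i\<close> the output weight \<open>\<sigma>(x\<^sub>i) q^(N-1-i)\<close> with
\<open>q = 1 + 2R/\<gamma>\<close>. On \<open>x\<^sub>j\<close> the neurons before \<open>j\<close> contribute with the sign \<open>\<sigma>(x\<^sub>j)\<close> or
not at all, neuron \<open>j\<close> contributes at least \<open>\<gamma> q^(N-1-j)\<close>, and the later neurons subtract at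
most \<open>2R (q^(N-1-j) - 1)/(q - 1) = \<gamma> (q^(N-1-j) - 1)\<close>. So every signed score is at least \<open>\<gamma>\<close>,
and dividing by the norm \<open>sqrt (\<Sum>i<N. q^(2i))\<close> of the weight vector gives exactly
\<open>sqrt N \<cdot> M(\<gamma>, N)\<close>.\<close>

lemma dinner_abs_le_dnorm: "\<bar>dinner d u v\<bar> \<le> dnorm d u * dnorm d v"
proof -
  have "\<bar>dinner d u v\<bar> \<le> (\<Sum>i<d. \<bar>u i\<bar> * \<bar>v i\<bar>)"
    unfolding dinner_def by (metis (no_types, lifting) abs_mult sum.cong sum_abs)
  also have "\<dots> \<le> L2_set u {..<d} * L2_set v {..<d}"
    by (rule L2_set_mult_ineq)
  also have "\<dots> = dnorm d u * dnorm d v"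
    unfolding L2_set_def dnorm_def dinner_def by (simp add: power2_eq_square)
  finally show ?thesis .
qed

lemma dinner_unit_le_dnorm:
  assumes "dnorm d w = 1"
  shows "\<bar>dinner d w x\<bar> \<le> dnorm d x"
  using dinner_abs_le_dnorm[of d w x] assms by simp

lemma dnorm_pos:
  assumes "i < N" and "a i \<noteq> 0"
  shows "dnorm N a > 0"
proof -
  have "0 < (\<Sum>k<N. a k * a k)"
    using assms by (intro sum_pos2[of _ i]) (auto simp: zero_less_mult_iff linorder_neq_iff)
  then show ?thesis
    unfolding dnorm_def dinner_def by simp
qed

lemma delta_separated_disjoint:
  assumes "delta_separated d \<delta> Xp Xm" and "\<delta> > 0"
  shows "Xp \<inter> Xm = {}"
  using assms unfolding delta_separated_def dnorm_def dinner_def by fastforce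

lemma bias_le_of_nonpos_point:
  assumes "dnorm d w = 1" and "dnorm d x \<le> R" and "dinner d w x + c \<le> 0"
  shows "c \<le> R"
  using dinner_unit_le_dnorm[OF assms(1), of x] assms(2,3) by linarith

lemma geometric_tail_sum:
  fixes q :: real
  assumes "j < N"
  shows "(q - 1) * (\<Sum>i\<in>{Suc j..<N}. q ^ (N - 1 - i)) = q ^ (N - 1 - j) - 1"
proof -
  have "(\<Sum>i\<in>{Suc j..<N}. q ^ (N - 1 - i)) = (\<Sum>m<N - 1 - j. q ^ m)"
    by (rule sum.reindex_bij_witness[where i="\<lambda>m. N - 1 - m" and j="\<lambda>i. N - 1 - i"])
      (use assms in auto)
  then show ?thesis
    by (simp add: power_diff_1_eq)
qed

text \<open>Here \<open>\<phi> i\<close> stands for the activation of neuron \<open>i\<close> on a fixed point \<open>x\<^sub>j\<close>.\<close>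

lemma signed_geometric_combination_ge:
  fixes \<phi> s :: "nat \<Rightarrow> real"
  assumes "\<gamma> > 0" and "B \<le> \<gamma> * (q - 1)" and "j < N"
    and range: "\<And>i. i < N \<Longrightarrow> 0 \<le> \<phi> i \<and> \<phi> i \<le> B"
    and diag: "\<gamma> \<le> \<phi> j"
    and cut: "\<And>i. i < j \<Longrightarrow> s i \<noteq> s j \<Longrightarrow> \<phi> i = 0"
    and sign: "\<And>i. s i = 1 \<or> s i = -1"
  shows "\<gamma> \<le> s j * (\<Sum>i<N. s i * q ^ (N - 1 - i) * \<phi> i)"
proof -
  let ?t = "\<lambda>i. s j * s i * q ^ (N - 1 - i) * \<phi> i"
  let ?tail = "\<Sum>i\<in>{Suc j..<N}. q ^ (N - 1 - i)"
  have "\<gamma> * 1 \<le> \<gamma> * (q - 1)"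
    using range[OF \<open>j < N\<close>] diag assms(2) by linarith
  then have "1 \<le> q - 1"
    using \<open>\<gamma> > 0\<close> by (rule mult_left_le_imp_le)
  then have "q \<ge> 1"
    by simp
  have head: "0 \<le> (\<Sum>i<j. ?t i)"
  proof (rule sum_nonneg)
    fix i assume "i \<in> {..<j}"
    then show "0 \<le> ?t i"
      using sign[of i] sign[of j] cut[of i] range[of i] \<open>j < N\<close> \<open>q \<ge> 1\<close> by auto
  qed
  have diagonal: "q ^ (N - 1 - j) * \<gamma> \<le> ?t j"
    using sign[of j] diag \<open>q \<ge> 1\<close> by auto
  have tail: "- (B * ?tail) \<le> (\<Sum>i\<in>{Suc j..<N}. ?t i)"
  proof -
    have "(\<Sum>i\<in>{Suc j..<N}. - (B * q ^ (N - 1 - i))) \<le> (\<Sum>i\<in>{Suc j..<N}. ?t i)"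
    proof (rule sum_mono)
      fix i assume "i \<in> {Suc j..<N}"
      then have "0 \<le> q ^ (N - 1 - i) * \<phi> i" "q ^ (N - 1 - i) * \<phi> i \<le> q ^ (N - 1 - i) * B"
        using range[of i] \<open>q \<ge> 1\<close> by (auto intro: mult_left_mono)
      then show "- (B * q ^ (N - 1 - i)) \<le> ?t i"
        using sign[of i] sign[of j] by (auto simp: algebra_simps)
    qed
    then show ?thesis
      by (simp add: sum_distrib_left sum_negf)
  qed
  have "B * ?tail \<le> \<gamma> * (q - 1) * ?tail"
    using assms(2) \<open>q \<ge> 1\<close> by (intro mult_right_mono sum_nonneg) auto
  also have "\<dots> = \<gamma> * (q ^ (N - 1 - j) - 1)"
    by (simp only: mult.assoc geometric_tail_sum[OF \<open>j < N\<close>])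
  finally have tail_bound: "B * ?tail \<le> \<gamma> * (q ^ (N - 1 - j) - 1)" .
  have "(\<Sum>i<N. ?t i) = (\<Sum>i<j. ?t i) + (\<Sum>i\<in>{j..<N}. ?t i)"
    using sum.atLeastLessThan_concat[of 0 j N ?t] \<open>j < N\<close> by (simp only: lessThan_atLeast0)
  also have "(\<Sum>i\<in>{j..<N}. ?t i) = ?t j + (\<Sum>i\<in>{Suc j..<N}. ?t i)"
    using \<open>j < N\<close> by (rule sum.atLeast_Suc_lessThan)
  finally have split: "(\<Sum>i<N. ?t i) = (\<Sum>i<j. ?t i) + (?t j + (\<Sum>i\<in>{Suc j..<N}. ?t i))" .
  have "\<gamma> = q ^ (N - 1 - j) * \<gamma> - \<gamma> * (q ^ (N - 1 - j) - 1)"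
    by (simp add: algebra_simps)
  also have "\<dots> \<le> (\<Sum>i<N. ?t i)"
    unfolding split using head diagonal tail tail_bound by linarith
  also have "\<dots> = s j * (\<Sum>i<N. s i * q ^ (N - 1 - i) * \<phi> i)"
    by (simp add: sum_distrib_left mult.assoc)
  finally show ?thesis .
qed

lemma sqrt_mult_margin_M:
  assumes "R > 0" and "\<gamma> > 0" and "N > 0"
  shows "sqrt (real N) * margin_M R \<gamma> N = \<gamma> / sqrt (\<Sum>i<N. ((1 + 2 * R / \<gamma>)\<^sup>2) ^ i)"
proof -
  define q where "q = 1 + 2 * R / \<gamma>"
  define S where "S = (\<Sum>i<N. (q\<^sup>2) ^ i)"
  have "q > 1"
    unfolding q_def using assms(1,2) by simp
  then have "q\<^sup>2 - 1 \<noteq> 0"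
    using one_less_power[of q 2] by linarith
  have numerator: "4 * R * (R + \<gamma>) = (q\<^sup>2 - 1) * \<gamma>\<^sup>2"
    unfolding q_def using assms(2) by (simp add: field_simps power2_eq_square)
  have "real N * q ^ (2 * N) - real N = real N * ((q\<^sup>2) ^ N - 1)"
    by (simp add: right_diff_distrib power_mult)
  also have "\<dots> = (q\<^sup>2 - 1) * (real N * S)"
    unfolding S_def power_diff_1_eq by (simp only: mult.left_commute)
  finally have denominator: "real N * q ^ (2 * N) - real N = (q\<^sup>2 - 1) * (real N * S)" .
  have "margin_M R \<gamma> N = sqrt (\<gamma>\<^sup>2 / (real N * S))"
    unfolding margin_M_def q_def[symmetric] numerator denominator
    using \<open>q\<^sup>2 - 1 \<noteq> 0\<close> by simp
  then show ?thesis
    unfolding q_def[symmetric] S_def[symmetric] using assms(2,3)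
    by (simp add: real_sqrt_divide real_sqrt_mult)
qed

lemma lin_sep_marginI:
  assumes "a \<in> rvecs N" and "i < N" and "a i \<noteq> 0" and "\<gamma> > 0"
    and "\<And>s. s \<in> Sp \<Longrightarrow> \<gamma> \<le> dinner N a s"
    and "\<And>s. s \<in> Sm \<Longrightarrow> dinner N a s \<le> - \<gamma>"
    and "m \<le> \<gamma> / dnorm N a"
  shows "lin_sep_margin N Sp Sm m"
  unfolding lin_sep_margin_def
proof (rule exI[of _ a], rule exI[of _ 0], intro conjI ballI)
  have "dnorm N a > 0"
    using dnorm_pos assms(2,3) .
  fix s assume "s \<in> Sp \<union> Sm"
  then have "\<gamma> \<le> \<bar>dinner N a s + 0\<bar>"
    using assms(5,6) by fastforce
  then show "m \<le> \<bar>dinner N a s + 0\<bar> / dnorm N a"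
    using assms(7) \<open>dnorm N a > 0\<close> by (smt (verit) divide_right_mono)
qed (use assms in fastforce)+

lemma relu_features_separable:
  fixes xs w :: "nat \<Rightarrow> nat \<Rightarrow> real" and lbl :: "nat \<Rightarrow> bool"
  assumes "R > 0" and "\<gamma> > 0" and "N > 0"
    and radius: "\<And>j. j < N \<Longrightarrow> dnorm d (xs j) \<le> R"
    and unit: "\<And>i. i < N \<Longrightarrow> dnorm d (w i) = 1"
    and bias: "\<And>i. i < N \<Longrightarrow> b i \<le> R"
    and fires: "\<And>i. i < N \<Longrightarrow> \<gamma> \<le> dinner d (w i) (xs i) + b i"
    and cuts: "\<And>i j. i < j \<Longrightarrow> j < N \<Longrightarrow> lbl i \<noteq> lbl j \<Longrightarrow> dinner d (w i) (xs j) + b i \<le> - \<gamma>"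
  shows "lin_sep_margin N
     ((\<lambda>j. relu_map d N w b (xs j)) ` {j \<in> {..<N}. lbl j})
     ((\<lambda>j. relu_map d N w b (xs j)) ` {j \<in> {..<N}. \<not> lbl j})
     (sqrt (real N) * margin_M R \<gamma> N)"
proof -
  define q where "q = 1 + 2 * R / \<gamma>"
  define \<sigma> where "\<sigma> j = (if lbl j then 1 else - 1 :: real)" for j
  define a where "a i = (if i < N then \<sigma> i * q ^ (N - 1 - i) else 0)" for i
  define \<phi> where "\<phi> i j = max (dinner d (w i) (xs j) + b i) 0" for i j
  have sign: "\<sigma> i = 1 \<or> \<sigma> i = -1" for i
    unfolding \<sigma>_def by auto
  have "q > 0"
    unfolding q_def using assms(1,2) by (simp add: add_pos_nonneg)
  have score: "\<gamma> \<le> \<sigma> j * dinner N a (relu_map d N w b (xs j))" if "j < N" for j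
  proof -
    have "dinner N a (relu_map d N w b (xs j)) = (\<Sum>i<N. \<sigma> i * q ^ (N - 1 - i) * \<phi> i j)"
      unfolding dinner_def relu_map_def a_def \<phi>_def by (rule sum.cong) auto
    moreover have "\<gamma> \<le> \<sigma> j * (\<Sum>i<N. \<sigma> i * q ^ (N - 1 - i) * \<phi> i j)"
    proof (rule signed_geometric_combination_ge[OF \<open>\<gamma> > 0\<close> _ \<open>j < N\<close>])
      show "2 * R \<le> \<gamma> * (q - 1)"
        unfolding q_def using \<open>\<gamma> > 0\<close> by simp
      show "0 \<le> \<phi> i j \<and> \<phi> i j \<le> 2 * R" if "i < N" for i
        using dinner_unit_le_dnorm[OF unit[OF that], of "xs j"] radius[OF \<open>j < N\<close>] bias[OF that]
          assms(1) unfolding \<phi>_def by auto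
      show "\<gamma> \<le> \<phi> j j"
        using fires[OF \<open>j < N\<close>] unfolding \<phi>_def by simp
      show "\<phi> i j = 0" if "i < j" and "\<sigma> i \<noteq> \<sigma> j" for i
        using cuts[OF that(1) \<open>j < N\<close>] that(2) \<open>\<gamma> > 0\<close> unfolding \<phi>_def \<sigma>_def
        by (cases "lbl i"; cases "lbl j") auto
    qed (rule sign)
    ultimately show ?thesis
      by simp
  qed
  have "dinner N a a = (\<Sum>i<N. (q\<^sup>2) ^ (N - Suc i))"
    unfolding dinner_def
  proof (rule sum.cong)
    fix i assume "i \<in> {..<N}"
    then have "a i * a i = (\<sigma> i * \<sigma> i) * (q ^ (N - Suc i) * q ^ (N - Suc i))"
      unfolding a_def by (simp add: mult_ac)
    moreover have "\<sigma> i * \<sigma> i = 1"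
      using sign[of i] by auto
    ultimately show "a i * a i = (q\<^sup>2) ^ (N - Suc i)"
      by (simp add: power2_eq_square power_mult_distrib)
  qed simp
  then have "dnorm N a = sqrt (\<Sum>i<N. (q\<^sup>2) ^ i)"
    unfolding dnorm_def by (simp add: sum.nat_diff_reindex)
  then have margin: "sqrt (real N) * margin_M R \<gamma> N = \<gamma> / dnorm N a"
    using sqrt_mult_margin_M[OF assms(1-3)] unfolding q_def by simp
  show ?thesis
  proof (rule lin_sep_marginI[of a N 0 \<gamma>])
    show "a \<in> rvecs N"
      unfolding rvecs_def a_def by simp
    show "a 0 \<noteq> 0"
      using \<open>N > 0\<close> \<open>q > 0\<close> sign[of 0] unfolding a_def by auto
    show "\<gamma> \<le> dinner N a s" if "s \<in> (\<lambda>j. relu_map d N w b (xs j)) ` {j \<in> {..<N}. lbl j}" for s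
    proof -
      from that obtain j where "j < N" "lbl j" "s = relu_map d N w b (xs j)"
        by blast
      then show ?thesis
        using score[of j] by (simp add: \<sigma>_def)
    qed
    show "dinner N a s \<le> - \<gamma>" if "s \<in> (\<lambda>j. relu_map d N w b (xs j)) ` {j \<in> {..<N}. \<not> lbl j}" for s
    proof -
      from that obtain j where "j < N" "\<not> lbl j" "s = relu_map d N w b (xs j)"
        by blast
      then show ?thesis
        using score[of j] by (simp add: \<sigma>_def)
    qed
  qed (simp_all add: assms(2,3) margin)
qed

lemma image_partition_reindex:
  assumes "xs ` I = A \<union> B" and "A \<inter> B = {}"
  shows "f ` A = (\<lambda>j. f (xs j)) ` {j \<in> I. xs j \<in> A}"
    and "f ` B = (\<lambda>j. f (xs j)) ` {j \<in> I. xs j \<notin> A}"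
proof -
  have "x \<in> xs ` {j \<in> I. xs j \<notin> A}" if "x \<in> B" for x
  proof -
    from that assms(1) obtain j where "j \<in> I" and "x = xs j"
      by (metis UnI2 imageE)
    with that assms(2) show ?thesis
      by blast
  qed
  with assms have "xs ` {j \<in> I. xs j \<in> A} = A" and "xs ` {j \<in> I. xs j \<notin> A} = B"
    by auto
  then show "f ` A = (\<lambda>j. f (xs j)) ` {j \<in> I. xs j \<in> A}"
    and "f ` B = (\<lambda>j. f (xs j)) ` {j \<in> I. xs j \<notin> A}"
    by (simp_all add: image_image[symmetric])
qed

lemma algorithm1_separates:
  fixes \<delta> R \<gamma> :: real
  assumes "\<delta> > 0" and "R > 0" and "\<gamma> > 0"
    and "Xp \<union> Xm \<noteq> {}"
    and radius: "\<forall>x\<in>Xp \<union> Xm. dnorm d x \<le> R"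
    and "delta_separated d \<delta> Xp Xm"
    and enum: "bij_betw xs {..<N} (Xp \<union> Xm)"
    and unit_rows: "\<forall>i<N. w i \<in> rvecs d \<and> dnorm d (w i) = 1"
    and neurons: "\<forall>i<N.
       if (\<exists>j. i < j \<and> j < N \<and> (xs j \<in> Xp \<longleftrightarrow> xs i \<notin> Xp))
       then dinner d (w i) (xs i) + b i \<ge> \<gamma> \<and>
            (\<forall>j. i < j \<and> j < N \<and> (xs j \<in> Xp \<longleftrightarrow> xs i \<notin> Xp) \<longrightarrow>
                 dinner d (w i) (xs j) + b i \<le> - \<gamma>)
       else dinner d (w i) (xs i) + b i \<ge> \<gamma> \<and>
            (\<exists>x\<in>rvecs d. dnorm d x \<le> R \<and> dinner d (w i) x + b i \<le> 0)"
  shows "lin_sep_margin N (relu_map d N w b ` Xp) (relu_map d N w b ` Xm)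
          (sqrt (real N) * margin_M R \<gamma> N)"
proof -
  have disjoint: "Xp \<inter> Xm = {}"
    by (rule delta_separated_disjoint[OF assms(6,1)])
  have cover: "xs ` {..<N} = Xp \<union> Xm"
    using enum by (rule bij_betw_imp_surj_on)
  have "N > 0"
    using enum \<open>Xp \<union> Xm \<noteq> {}\<close> unfolding bij_betw_def by auto
  have xs_radius: "dnorm d (xs j) \<le> R" if "j < N" for j
    using radius enum that by (auto dest: bij_betw_apply)
  have unit: "dnorm d (w i) = 1" if "i < N" for i
    using unit_rows that by blast
  have fires: "\<gamma> \<le> dinner d (w i) (xs i) + b i" if "i < N" for i
    using neurons[rule_format, OF that] by (simp split: if_split_asm)
  have cuts: "dinner d (w i) (xs j) + b i \<le> - \<gamma>"
    if "i < j" and "j < N" and "(xs i \<in> Xp) \<noteq> (xs j \<in> Xp)" for i j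
  proof -
    have "i < N" and "\<exists>j. i < j \<and> j < N \<and> (xs j \<in> Xp \<longleftrightarrow> xs i \<notin> Xp)"
      using that by auto
    then have "\<forall>j. i < j \<and> j < N \<and> (xs j \<in> Xp \<longleftrightarrow> xs i \<notin> Xp) \<longrightarrow>
        dinner d (w i) (xs j) + b i \<le> - \<gamma>"
      using neurons by simp
    then show ?thesis
      using that by blast
  qed
  have bias: "b i \<le> R" if "i < N" for i
  proof (cases "\<exists>j. i < j \<and> j < N \<and> (xs j \<in> Xp \<longleftrightarrow> xs i \<notin> Xp)")
    case True
    then obtain j where "i < j" "j < N" "(xs i \<in> Xp) \<noteq> (xs j \<in> Xp)"
      by blast
    then have "dinner d (w i) (xs j) + b i \<le> 0"
      using cuts \<open>\<gamma> > 0\<close> by fastforce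
    then show ?thesis
      using bias_le_of_nonpos_point unit[OF that] xs_radius[OF \<open>j < N\<close>] by blast
  next
    case False
    then have "\<exists>x\<in>rvecs d. dnorm d x \<le> R \<and> dinner d (w i) x + b i \<le> 0"
      using neurons that by simp
    then show ?thesis
      using bias_le_of_nonpos_point unit[OF that] by blast
  qed
  have "lin_sep_margin N
     ((\<lambda>j. relu_map d N w b (xs j)) ` {j \<in> {..<N}. xs j \<in> Xp})
     ((\<lambda>j. relu_map d N w b (xs j)) ` {j \<in> {..<N}. xs j \<notin> Xp})
     (sqrt (real N) * margin_M R \<gamma> N)"
    using assms(2,3) \<open>N > 0\<close> xs_radius unit bias fires cuts by (rule relu_features_separable)
  then show ?thesis
    unfolding image_partition_reindex[OF cover disjoint] .
qed

text \<open>The separation holds for every \<open>\<gamma> > 0\<close>: the upper bound on \<open>\<gamma>\<close> (through \<open>k\<close>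
and \<open>C\<close>), \<open>d \<ge> 2\<close> and the ordering by norm only matter for the existence of such neurons,
so \<open>C = 1\<close> will do.\<close>

theorem theorem2p3:
  fixes \<delta> R :: real
  assumes "\<delta> > 0" and "R > 0"
  shows "\<exists>C>0. \<forall>(d::nat) Xp Xm (N::nat) xs k \<gamma> w b.
    d \<ge> 2 \<and>
    finite Xp \<and> finite Xm \<and> Xp \<union> Xm \<noteq> {} \<and>
    Xp \<subseteq> rvecs d \<and> Xm \<subseteq> rvecs d \<and>
    (\<forall>x\<in>Xp \<union> Xm. dnorm d x \<le> R) \<and>
    delta_separated d \<delta> Xp Xm \<and>
    N = card Xp + card Xm \<and>
    bij_betw xs {..<N} (Xp \<union> Xm) \<and>
    (\<forall>i j. i < j \<and> j < N \<longrightarrow> dnorm d (xs j) \<le> dnorm d (xs i)) \<and>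
    k = C * (32 * R / \<delta>\<^sup>2)\<^sup>2 *
          ((gaussian_width d (set_diff_vec Xp Xm \<union> Xp \<union> Xm))\<^sup>2 + R\<^sup>2) \<and>
    0 < \<gamma> \<and> \<gamma> \<le> max (\<delta>\<^sup>2 / (8 * R * real d)) (\<delta>\<^sup>2 / (18 * R * sqrt k)) \<and>
    (\<forall>i<N. w i \<in> rvecs d \<and> dnorm d (w i) = 1) \<and>
    (\<forall>i<N.
       if (\<exists>j. i < j \<and> j < N \<and> (xs j \<in> Xp \<longleftrightarrow> xs i \<notin> Xp))
       then dinner d (w i) (xs i) + b i \<ge> \<gamma> \<and>
            (\<forall>j. i < j \<and> j < N \<and> (xs j \<in> Xp \<longleftrightarrow> xs i \<notin> Xp) \<longrightarrow>
                 dinner d (w i) (xs j) + b i \<le> - \<gamma>)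
       else dinner d (w i) (xs i) + b i \<ge> \<gamma> \<and>
            (\<exists>x\<in>rvecs d. dnorm d x \<le> R \<and> dinner d (w i) x + b i \<le> 0))
    \<longrightarrow> lin_sep_margin N (relu_map d N w b ` Xp) (relu_map d N w b ` Xm)
          (sqrt (real N) * margin_M R \<gamma> N)"
  by (intro exI[of _ "1::real"] conjI allI impI)
    (simp, elim conjE, rule algorithm1_separates[OF assms], assumption+)

end
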